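(* For fixed nonnegative integers $r,s$, the quantity $$\frac{1}{n!}\sum_{\pi\in S_n}\mathrm{inv}(\pi)^r\,\mathrm{maj}(\pi)^s$$ is, for $n\ge1$, given by a polynomial in $n$ (with rational coefficients). Likewise, for fixed $r,s$, the factorial moment $FM(r,s)(n,i)$ defined below is given by a polynomial in $(n,i)$ for all $1\le i\le n$.
   Context: For a permutation $\pi=\pi_1\cdots\pi_n$ of $\{1,\dots,n\}$: $\mathrm{inv}(\pi)$ is the number of pairs $1\le i<j\le n$ with $\pi_i>\pi_j$, and $\mathrm{maj}(\pi)$ is the sum of all positions $i\in\{1,\dots,n-1\}$ with $\pi_i>\pi_{i+1}$. Let $z^{(k)}=z(z-1)\cdots(z-k+1)$ denote the falling factorial ($z^{(0)}=1$). For $1\le i\le n$ let $\mu_{n,i}=n-i+(n-1)(n-2)/4$ and $$FM(r,s)(n,i)=\frac{1}{(n-1)!}\sum_{\pi\in S_n,\ \pi_n=i}(\mathrm{inv}(\pi)-\mu_{n,i})^{(r)}(\mathrm{maj}(\pi)-\mu_{n,i})^{(s)} .$$ *)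

theory Defs
  imports "HOL-Combinatorics.Permutations" "HOL-Computational_Algebra.Polynomial"
begin

definition inv_num :: "nat \<Rightarrow> (nat \<Rightarrow> nat) \<Rightarrow> nat" where
  "inv_num n p = card {(i, j). 1 \<le> i \<and> i < j \<and> j \<le> n \<and> p i > p j}"

definition maj_num :: "nat \<Rightarrow> (nat \<Rightarrow> nat) \<Rightarrow> nat" where
  "maj_num n p = (\<Sum> i \<in> {i. 1 \<le> i \<and> i \<le> n - 1 \<and> p i > p (Suc i)}. i)"

definition falling :: "rat \<Rightarrow> nat \<Rightarrow> rat" where
  "falling z k = (\<Prod> j < k. (z - of_nat j))"

definition mu :: "nat \<Rightarrow> nat \<Rightarrow> rat" where
  "mu n i = of_nat n - of_nat i + (of_nat n - 1) * (of_nat n - 2) / 4"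

definition FM :: "nat \<Rightarrow> nat \<Rightarrow> nat \<Rightarrow> nat \<Rightarrow> rat" where
  "FM r s n i = (1 / of_nat (fact (n - 1))) *
     (\<Sum> p \<in> {p. p permutes {1..n} \<and> p n = i}.
        falling (of_nat (inv_num n p) - mu n i) r * falling (of_nat (maj_num n p) - mu n i) s)"

end

theory Submission
  imports Defs
begin

(* Write M_{r,s}(n) for the sum of inv^r maj^s over S_n and G_{r,s}(n,i) for the same sum
   restricted to the permutations with last letter i.  Deleting the last letter i of a
   permutation of length m+1 and standardising is a bijection onto S_m, under which inv
   drops by m+1-i and maj drops by m exactly when the previous letter is at least i.
   Expanding binomially, G_{r,s}(m+1,i)/m! equals M_{r,s}(m)/m! plus a term L(m,i) built
   from the M_{a,s} with a < r and the tail sums of the G_{a,b} with b < s.  Since partial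
   sums of polynomials are polynomials (Faulhaber), a double induction on (s,r) shows that
   M_{r,s}(n)/n! and G_{r,s}(n,i)/(n-1)! are polynomials; summing the relation over i shows
   that M_{r,s}(m+1)/(m+1)! - M_{r,s}(m)/m! is a polynomial in m.  Finally FM(r,s)(n,i) is
   a polynomial combination of the G_{a,b}(n,i)/(n-1)!. *)

inductive bipoly :: "(rat \<Rightarrow> rat \<Rightarrow> rat) \<Rightarrow> bool" where
  const: "bipoly (\<lambda>x y. c)"
| mult_x: "bipoly f \<Longrightarrow> bipoly (\<lambda>x y. x * f x y)"
| mult_y: "bipoly f \<Longrightarrow> bipoly (\<lambda>x y. y * f x y)"
| add: "bipoly f \<Longrightarrow> bipoly g \<Longrightarrow> bipoly (\<lambda>x y. f x y + g x y)"

lemma bipoly_cong: "bipoly f \<Longrightarrow> (\<And>x y. f x y = g x y) \<Longrightarrow> bipoly g"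
  by (metis ext)

lemma bipoly_x: "bipoly (\<lambda>x y. x)"
  using bipoly.mult_x[OF bipoly.const[of 1]] by simp

lemma bipoly_y: "bipoly (\<lambda>x y. y)"
  using bipoly.mult_y[OF bipoly.const[of 1]] by simp

lemma bipoly_scale: "bipoly f \<Longrightarrow> bipoly (\<lambda>x y. c * f x y)"
proof (induction f rule: bipoly.induct)
  case (const k)
  show ?case using bipoly.const[of "c * k"] .
next
  case (mult_x f)
  show ?case using bipoly.mult_x[OF mult_x.IH] by (rule bipoly_cong) (simp add: algebra_simps)
next
  case (mult_y f)
  show ?case using bipoly.mult_y[OF mult_y.IH] by (rule bipoly_cong) (simp add: algebra_simps)
next
  case (add f g)
  show ?case using bipoly.add[OF add.IH] by (rule bipoly_cong) (simp add: algebra_simps)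
qed

lemma bipoly_mult: "bipoly f \<Longrightarrow> bipoly g \<Longrightarrow> bipoly (\<lambda>x y. f x y * g x y)"
proof (induction f rule: bipoly.induct)
  case (const c)
  then show ?case by (rule bipoly_scale)
next
  case (mult_x f)
  show ?case using bipoly.mult_x[OF mult_x.IH[OF mult_x.prems]]
    by (rule bipoly_cong) (simp add: algebra_simps)
next
  case (mult_y f)
  show ?case using bipoly.mult_y[OF mult_y.IH[OF mult_y.prems]]
    by (rule bipoly_cong) (simp add: algebra_simps)
next
  case (add f1 f2)
  show ?case using bipoly.add[OF add.IH(1)[OF add.prems] add.IH(2)[OF add.prems]]
    by (rule bipoly_cong) (simp add: algebra_simps)
qed

lemma bipoly_diff: "bipoly f \<Longrightarrow> bipoly g \<Longrightarrow> bipoly (\<lambda>x y. f x y - g x y)"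
  by (rule bipoly_cong[OF bipoly.add[OF _ bipoly_scale[of g "-1"]]]) simp_all

lemma bipoly_divide: "bipoly f \<Longrightarrow> bipoly (\<lambda>x y. f x y / c)"
  by (rule bipoly_cong[OF bipoly_scale[of f "1 / c"]]) simp_all

lemma bipoly_power: "bipoly f \<Longrightarrow> bipoly (\<lambda>x y. f x y ^ k)"
  by (induction k) (simp_all add: bipoly.const bipoly_mult)

lemma bipoly_sum:
  "finite A \<Longrightarrow> (\<And>a. a \<in> A \<Longrightarrow> bipoly (F a)) \<Longrightarrow> bipoly (\<lambda>x y. \<Sum>a\<in>A. F a x y)"
  by (induction A rule: finite_induct) (simp_all add: bipoly.const bipoly.add)

lemma bipoly_compose:
  "bipoly f \<Longrightarrow> bipoly g \<Longrightarrow> bipoly h \<Longrightarrow> bipoly (\<lambda>x y. f (g x y) (h x y))"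
  by (induction f rule: bipoly.induct) (simp_all add: bipoly.const bipoly.add bipoly_mult)

(* Every f(x,y) can be written as f(0,y) + x g(x,y) with g polynomial; this is used to
   divide a polynomial vanishing at x = 0 by x. *)
lemma bipoly_split_x:
  assumes "bipoly f"
  shows "\<exists>g. bipoly g \<and> (\<forall>x y. f x y = f 0 y + x * g x y)"
  using assms
proof (induction f rule: bipoly.induct)
  case (const c)
  show ?case by (intro exI[of _ "\<lambda>x y. 0"]) (simp add: bipoly.const)
next
  case (mult_x f)
  then show ?case by (intro exI[of _ f]) simp
next
  case (mult_y f)
  then obtain g where "bipoly g" and g: "\<And>x y. f x y = f 0 y + x * g x y" by blast
  have eq: "\<forall>x y. y * f x y = y * f 0 y + x * (y * g x y)"
    by (metis g mult.left_commute distrib_left)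
  show ?case by (intro exI[of _ "\<lambda>x y. y * g x y"] conjI bipoly.mult_y \<open>bipoly g\<close> eq)
next
  case (add f1 f2)
  then obtain g1 g2 where "bipoly g1" "bipoly g2"
    and g: "\<And>x y. f1 x y = f1 0 y + x * g1 x y" "\<And>x y. f2 x y = f2 0 y + x * g2 x y"
    by blast
  have eq: "\<forall>x y. f1 x y + f2 x y = f1 0 y + f2 0 y + x * (g1 x y + g2 x y)"
    by (metis g add.assoc add.left_commute distrib_left)
  show ?case
    by (intro exI[of _ "\<lambda>x y. g1 x y + g2 x y"] conjI bipoly.add \<open>bipoly g1\<close> \<open>bipoly g2\<close> eq)
qed

lemma bipoly_univariate:
  assumes "bipoly f"
  shows "\<exists>P. \<forall>x. f x c = poly P x"
  using assms
proof (induction f rule: bipoly.induct)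
  case (const k)
  show ?case by (intro exI[of _ "[:k:]"]) simp
next
  case (mult_x f)
  then obtain P where "\<forall>x. f x c = poly P x" by blast
  then show ?case by (intro exI[of _ "[:0, 1:] * P"]) simp
next
  case (mult_y f)
  then obtain P where "\<forall>x. f x c = poly P x" by blast
  then show ?case by (intro exI[of _ "smult c P"]) simp
next
  case (add f1 f2)
  then obtain P1 P2 where "\<forall>x. f1 x c = poly P1 x" "\<forall>x. f2 x c = poly P2 x" by blast
  then show ?case by (intro exI[of _ "P1 + P2"]) simp
qed

definition coeff_form :: "nat \<Rightarrow> nat \<Rightarrow> (rat \<Rightarrow> rat \<Rightarrow> rat) \<Rightarrow> bool" where
  "coeff_form d e f \<longleftrightarrow> (\<exists>c. \<forall>x y. f x y = (\<Sum>a\<le>d. \<Sum>b\<le>e. c a b * x ^ a * y ^ b))"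

lemma coeff_form_mono:
  assumes "coeff_form d e f" "d \<le> d'" "e \<le> e'"
  shows "coeff_form d' e' f"
proof -
  obtain c where c: "\<And>x y. f x y = (\<Sum>a\<le>d. \<Sum>b\<le>e. c a b * x ^ a * y ^ b)"
    using assms(1) unfolding coeff_form_def by blast
  define c' where "c' a b = (if a \<le> d \<and> b \<le> e then c a b else 0)" for a b
  have "f x y = (\<Sum>a\<le>d'. \<Sum>b\<le>e'. c' a b * x ^ a * y ^ b)" for x y
  proof -
    have "(\<Sum>a\<le>d'. \<Sum>b\<le>e'. c' a b * x ^ a * y ^ b) = (\<Sum>a\<le>d. \<Sum>b\<le>e'. c' a b * x ^ a * y ^ b)"
      using assms(2) by (intro sum.mono_neutral_right) (auto simp: c'_def)
    also have "\<dots> = (\<Sum>a\<le>d. \<Sum>b\<le>e. c' a b * x ^ a * y ^ b)"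
      using assms(3) by (intro sum.cong refl sum.mono_neutral_right) (auto simp: c'_def)
    finally show ?thesis by (simp add: c c'_def)
  qed
  then show ?thesis unfolding coeff_form_def by (intro exI[of _ c'] allI)
qed

lemma bipoly_coeff_form_rect:
  assumes "bipoly f"
  shows "\<exists>d e. coeff_form d e f"
  using assms
proof (induction f rule: bipoly.induct)
  case (const k)
  have "coeff_form 0 0 (\<lambda>x y. k)"
    unfolding coeff_form_def by (intro exI[of _ "\<lambda>a b. k"]) simp
  then show ?case by blast
next
  case (mult_x f)
  then obtain d e c where c: "\<And>x y. f x y = (\<Sum>a\<le>d. \<Sum>b\<le>e. c a b * x ^ a * y ^ b)"
    unfolding coeff_form_def by blast
  define c' where "c' a b = (if a = 0 then 0 else c (a - 1) b)" for a b
  have "\<forall>x y. x * f x y = (\<Sum>a\<le>Suc d. \<Sum>b\<le>e. c' a b * x ^ a * y ^ b)"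
    by (simp only: sum.atMost_Suc_shift c) (simp add: c'_def sum_distrib_left mult_ac)
  then have "coeff_form (Suc d) e (\<lambda>x y. x * f x y)"
    unfolding coeff_form_def by (rule exI[of _ c'])
  then show ?case by blast
next
  case (mult_y f)
  then obtain d e c where c: "\<And>x y. f x y = (\<Sum>a\<le>d. \<Sum>b\<le>e. c a b * x ^ a * y ^ b)"
    unfolding coeff_form_def by blast
  define c' where "c' a b = (if b = 0 then 0 else c a (b - 1))" for a b
  have "\<forall>x y. y * f x y = (\<Sum>a\<le>d. \<Sum>b\<le>Suc e. c' a b * x ^ a * y ^ b)"
    by (simp only: sum.atMost_Suc_shift c) (simp add: c'_def sum_distrib_left mult_ac)
  then have "coeff_form d (Suc e) (\<lambda>x y. y * f x y)"
    unfolding coeff_form_def by (rule exI[of _ c'])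
  then show ?case by blast
next
  case (add f g)
  then obtain d1 e1 d2 e2 where f: "coeff_form d1 e1 f" and g: "coeff_form d2 e2 g" by blast
  have "coeff_form (max d1 d2) (max e1 e2) f" "coeff_form (max d1 d2) (max e1 e2) g"
    by (rule coeff_form_mono[OF f] coeff_form_mono[OF g]; simp)+
  then obtain c1 c2 where f_eq:
    "\<And>x y. f x y = (\<Sum>a\<le>max d1 d2. \<Sum>b\<le>max e1 e2. c1 a b * x ^ a * y ^ b)"
    and g_eq: "\<And>x y. g x y = (\<Sum>a\<le>max d1 d2. \<Sum>b\<le>max e1 e2. c2 a b * x ^ a * y ^ b)"
    unfolding coeff_form_def by blast
  define c where "c a b = c1 a b + c2 a b" for a b
  have "\<forall>x y. f x y + g x y = (\<Sum>a\<le>max d1 d2. \<Sum>b\<le>max e1 e2. c a b * x ^ a * y ^ b)"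
    unfolding f_eq g_eq c_def by (simp add: sum.distrib distrib_right)
  then have "coeff_form (max d1 d2) (max e1 e2) (\<lambda>x y. f x y + g x y)"
    unfolding coeff_form_def by (rule exI[of _ c])
  then show ?case by blast
qed

lemma bipoly_coeff_form:
  assumes "bipoly f"
  shows "\<exists>d c. \<forall>x y. f x y = (\<Sum>a\<le>d. \<Sum>b\<le>d. c a b * x ^ a * y ^ b)"
proof -
  obtain d e where "coeff_form d e f" using bipoly_coeff_form_rect[OF assms] by blast
  then have "coeff_form (max d e) (max d e) f" by (rule coeff_form_mono) simp_all
  then show ?thesis unfolding coeff_form_def by blast
qed

(* Telescoping (j+1)^(b+1) - j^(b+1) expresses m^(b+1) through the power sums of
   exponent at most b; this is the recurrence behind Faulhaber's formulas. *)
lemma sum_of_powers_recurrence: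
  "(of_nat m :: rat) ^ Suc b =
     (\<Sum>k<b. of_nat (Suc b choose k) * (\<Sum>j<m. of_nat j ^ k)) + of_nat (Suc b) * (\<Sum>j<m. of_nat j ^ b)"
proof -
  have step: "(1 + z) ^ Suc b - z ^ Suc b = (\<Sum>k<Suc b. of_nat (Suc b choose k) * z ^ k)" for z :: rat
    using binomial_ring[of z 1 "Suc b"] by (simp add: add.commute lessThan_Suc_atMost[symmetric])
  have "(of_nat m :: rat) ^ Suc b = (\<Sum>j<m. of_nat (Suc j) ^ Suc b - of_nat j ^ Suc b)"
    by (subst sum_lessThan_telescope) simp
  also have "\<dots> = (\<Sum>j<m. \<Sum>k<Suc b. of_nat (Suc b choose k) * (of_nat j :: rat) ^ k)"
    by (intro sum.cong refl) (simp only: of_nat_Suc step)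
  also have "\<dots> = (\<Sum>k<Suc b. of_nat (Suc b choose k) * (\<Sum>j<m. (of_nat j :: rat) ^ k))"
    by (subst sum.swap) (simp add: sum_distrib_left)
  finally show ?thesis by simp
qed

lemma sum_of_powers_bipoly:
  "\<exists>F. bipoly F \<and> (\<forall>x m. F x (of_nat m) = (\<Sum>j<m. (of_nat j :: rat) ^ b))"
proof (induction b rule: less_induct)
  case (less b)
  then obtain S where S: "\<And>k. k < b \<Longrightarrow> bipoly (S k)"
    "\<And>k x m. k < b \<Longrightarrow> S k x (of_nat m) = (\<Sum>j<m. (of_nat j :: rat) ^ k)"
    by metis
  define F where
    "F x y = (y ^ Suc b - (\<Sum>k<b. of_nat (Suc b choose k) * S k x y)) / of_nat (Suc b)" for x y
  have "bipoly F"
    unfolding F_def by (intro bipoly_divide bipoly_diff bipoly_power bipoly_y bipoly_sum bipoly_scale S) auto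
  moreover have "F x (of_nat m) = (\<Sum>j<m. (of_nat j :: rat) ^ b)" for x m
    unfolding F_def sum_of_powers_recurrence[of m b] by (simp add: S(2) del: of_nat_Suc)
  ultimately show ?case by blast
qed

(* Partial sums of a polynomial in the second variable are polynomial in the
   upper bound; the weight j^b makes the induction over the generators go through. *)
lemma bipoly_weighted_partial_sum:
  assumes "bipoly f"
  shows "\<exists>F. bipoly F \<and> (\<forall>x m. F x (of_nat m) = (\<Sum>j<m. f x (of_nat j) * of_nat j ^ b))"
  using assms
proof (induction f arbitrary: b rule: bipoly.induct)
  case (const c)
  obtain S where "bipoly S" "\<forall>x m. S x (of_nat m) = (\<Sum>j<m. (of_nat j :: rat) ^ b)"
    using sum_of_powers_bipoly by blast
  then show ?case
    by (intro exI[of _ "\<lambda>x y. c * S x y"]) (simp add: bipoly_scale sum_distrib_left)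
next
  case (mult_x f)
  then obtain F where "bipoly F" "\<forall>x m. F x (of_nat m) = (\<Sum>j<m. f x (of_nat j) * of_nat j ^ b)"
    by blast
  then show ?case
    by (intro exI[of _ "\<lambda>x y. x * F x y"]) (simp add: bipoly.mult_x sum_distrib_left mult.assoc)
next
  case (mult_y f)
  then obtain F where "bipoly F" "\<forall>x m. F x (of_nat m) = (\<Sum>j<m. f x (of_nat j) * of_nat j ^ Suc b)"
    by blast
  then show ?case by (intro exI[of _ F]) (simp add: mult_ac)
next
  case (add f g)
  then obtain F G where "bipoly F" "\<forall>x m. F x (of_nat m) = (\<Sum>j<m. f x (of_nat j) * of_nat j ^ b)"
    and "bipoly G" "\<forall>x m. G x (of_nat m) = (\<Sum>j<m. g x (of_nat j) * of_nat j ^ b)"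
    by blast
  then show ?case
    by (intro exI[of _ "\<lambda>x y. F x y + G x y"]) (simp add: bipoly.add sum.distrib distrib_right)
qed

lemma bipoly_partial_sum:
  assumes "bipoly f"
  shows "\<exists>F. bipoly F \<and> (\<forall>x m. F x (of_nat m) = (\<Sum>j<m. f x (of_nat j)))"
  using bipoly_weighted_partial_sum[OF assms, of 0] by simp

definition shift_up :: "nat \<Rightarrow> nat \<Rightarrow> nat" where
  "shift_up i v = (if i \<le> v then Suc v else v)"

definition shift_down :: "nat \<Rightarrow> nat \<Rightarrow> nat" where
  "shift_down i v = (if i < v then v - 1 else v)"

(* Appending the letter i to a permutation of {1..m}, shifting the old letters that
   are at least i; drop_last is the inverse standardisation. *)
definition append_last :: "nat \<Rightarrow> nat \<Rightarrow> (nat \<Rightarrow> nat) \<Rightarrow> nat \<Rightarrow> nat" where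
  "append_last m i \<sigma> k = (if k = Suc m then i else if k \<in> {1..m} then shift_up i (\<sigma> k) else k)"

definition drop_last :: "nat \<Rightarrow> nat \<Rightarrow> (nat \<Rightarrow> nat) \<Rightarrow> nat \<Rightarrow> nat" where
  "drop_last m i p k = (if k \<in> {1..m} then shift_down i (p k) else k)"

lemma shift_up_less_iff: "shift_up i a < shift_up i b \<longleftrightarrow> a < b"
  unfolding shift_up_def by auto

lemma shift_up_neq: "shift_up i a \<noteq> i"
  unfolding shift_up_def by auto

lemma less_shift_up_iff: "i < shift_up i a \<longleftrightarrow> i \<le> a"
  unfolding shift_up_def by auto

lemma permutes_facts:
  assumes "\<sigma> permutes {1..m}"
  shows "\<And>a b. \<sigma> a = \<sigma> b \<Longrightarrow> a = b" "\<And>k. k \<in> {1..m} \<Longrightarrow> \<sigma> k \<in> {1..m}"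
    "\<And>k. k \<notin> {1..m} \<Longrightarrow> \<sigma> k = k"
  using permutes_inj[OF assms] permutes_in_image[OF assms] permutes_not_in[OF assms]
  by (auto dest: injD)

lemma append_last_simps:
  "k \<in> {1..m} \<Longrightarrow> append_last m i \<sigma> k = shift_up i (\<sigma> k)"
  "append_last m i \<sigma> (Suc m) = i"
  "k \<notin> {1..Suc m} \<Longrightarrow> append_last m i \<sigma> k = k"
  unfolding append_last_def by auto

lemma append_last_permutes:
  assumes \<sigma>: "\<sigma> permutes {1..m}" and i: "1 \<le> i" "i \<le> Suc m"
  shows "append_last m i \<sigma> permutes {1..Suc m}"
proof (rule inj_imp_permutes)
  note \<sigma>_facts = permutes_facts[OF \<sigma>]
  have split: "k = Suc m \<or> k \<in> {1..m}" if "k \<in> {1..Suc m}" for k using that by auto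
  show "inj_on (append_last m i \<sigma>) {1..Suc m}"
  proof (rule inj_onI)
    fix a b assume ab: "a \<in> {1..Suc m}" "b \<in> {1..Suc m}" "append_last m i \<sigma> a = append_last m i \<sigma> b"
    from split[OF ab(1)] split[OF ab(2)] show "a = b"
    proof (elim disjE)
      assume "a \<in> {1..m}" "b \<in> {1..m}"
      then have "shift_up i (\<sigma> a) = shift_up i (\<sigma> b)" using ab(3) append_last_simps(1) by metis
      then have "\<sigma> a = \<sigma> b" by (metis shift_up_less_iff linorder_neqE_nat less_irrefl)
      then show ?thesis by (rule \<sigma>_facts(1))
    qed (use ab(3) append_last_simps(1,2) shift_up_neq in metis)+
  qed
  show "append_last m i \<sigma> k \<in> {1..Suc m}" if "k \<in> {1..Suc m}" for k
    using split[OF that] i \<sigma>_facts(2)[of k] by (auto simp: append_last_def shift_up_def)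
  show "append_last m i \<sigma> k = k" if "k \<notin> {1..Suc m}" for k
    using that by (rule append_last_simps(3))
qed simp

lemma drop_last_permutes:
  assumes p: "p permutes {1..Suc m}" and last: "p (Suc m) = i"
  shows "drop_last m i p permutes {1..m}"
proof (rule inj_imp_permutes)
  note p_facts = permutes_facts[OF p]
  have p_neq: "p k \<noteq> i" if "k \<in> {1..m}" for k
    using p_facts(1)[of k "Suc m"] that last by auto
  show "inj_on (drop_last m i p) {1..m}"
  proof (rule inj_onI)
    fix a b assume ab: "a \<in> {1..m}" "b \<in> {1..m}" "drop_last m i p a = drop_last m i p b"
    then have "shift_down i (p a) = shift_down i (p b)" by (simp add: drop_last_def)
    moreover have "p a \<noteq> i" "p b \<noteq> i" using p_neq ab by auto
    moreover have "p a \<ge> 1" "p b \<ge> 1" using p_facts(2)[of a] p_facts(2)[of b] ab by auto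
    ultimately have "p a = p b" unfolding shift_down_def by (auto split: if_splits)
    then show "a = b" by (rule p_facts(1))
  qed
  show "drop_last m i p k \<in> {1..m}" if "k \<in> {1..m}" for k
    using that last p_neq[OF that] p_facts(2)[of k] p_facts(2)[of "Suc m"]
    by (auto simp: drop_last_def shift_down_def)
  show "drop_last m i p k = k" if "k \<notin> {1..m}" for k
    using that by (auto simp: drop_last_def)
qed simp

lemma drop_last_append_last:
  assumes "\<sigma> permutes {1..m}"
  shows "drop_last m i (append_last m i \<sigma>) = \<sigma>"
  using permutes_facts(3)[OF assms]
  by (auto simp: fun_eq_iff drop_last_def append_last_def shift_up_def shift_down_def)

lemma append_last_drop_last:
  assumes p: "p permutes {1..Suc m}" and last: "p (Suc m) = i"
  shows "append_last m i (drop_last m i p) = p"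
proof
  fix k
  note p_facts = permutes_facts[OF p]
  show "append_last m i (drop_last m i p) k = p k"
  proof (cases "k \<in> {1..m}")
    case True
    then have "p k \<noteq> i" using p_facts(1)[of k "Suc m"] last by auto
    with True show ?thesis by (auto simp: drop_last_def append_last_def shift_up_def shift_down_def)
  next
    case False
    then show ?thesis using last p_facts(3)[of k] by (auto simp: append_last_def)
  qed
qed

lemma append_last_less_iff:
  "a \<in> {1..m} \<Longrightarrow> b \<in> {1..m} \<Longrightarrow>
     append_last m i \<sigma> b < append_last m i \<sigma> a \<longleftrightarrow> \<sigma> b < \<sigma> a"
  by (simp add: append_last_simps shift_up_less_iff)

lemma last_less_append_last_iff:
  "a \<in> {1..m} \<Longrightarrow> append_last m i \<sigma> (Suc m) < append_last m i \<sigma> a \<longleftrightarrow> i \<le> \<sigma> a"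
  by (simp add: append_last_simps less_shift_up_iff)

lemma inversions_append_last:
  "{(a, b). 1 \<le> a \<and> a < b \<and> b \<le> Suc m \<and> append_last m i \<sigma> a > append_last m i \<sigma> b}
     = {(a, b). 1 \<le> a \<and> a < b \<and> b \<le> m \<and> \<sigma> a > \<sigma> b}
       \<union> (\<lambda>a. (a, Suc m)) ` {a. 1 \<le> a \<and> a \<le> m \<and> i \<le> \<sigma> a}"
  by (auto simp: append_last_less_iff last_less_append_last_iff le_Suc_eq)

lemma descents_append_last:
  "{k. 1 \<le> k \<and> k \<le> Suc m - 1 \<and> append_last m i \<sigma> k > append_last m i \<sigma> (Suc k)}
     = {k. 1 \<le> k \<and> k \<le> m - 1 \<and> \<sigma> k > \<sigma> (Suc k)} \<union> {k. k = m \<and> 1 \<le> m \<and> i \<le> \<sigma> m}"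
    (is "?L = ?R")
proof
  show "?L \<subseteq> ?R"
  proof
    fix k assume "k \<in> ?L"
    then have k: "1 \<le> k" "k \<le> m" and desc: "append_last m i \<sigma> (Suc k) < append_last m i \<sigma> k"
      by auto
    show "k \<in> ?R"
    proof (cases "k = m")
      case True
      then show ?thesis using k desc by (simp add: last_less_append_last_iff)
    next
      case False
      then show ?thesis using k desc by (simp add: append_last_less_iff)
    qed
  qed
  show "?R \<subseteq> ?L"
    by (auto simp: append_last_less_iff last_less_append_last_iff)
qed

lemma card_values_at_least:
  assumes \<sigma>: "\<sigma> permutes {1..m}" and i: "1 \<le> i"
  shows "card {a. 1 \<le> a \<and> a \<le> m \<and> i \<le> \<sigma> a} = Suc m - i"
proof -
  let ?B = "{a. 1 \<le> a \<and> a \<le> m \<and> i \<le> \<sigma> a}"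
  have "\<sigma> ` ?B = {i..m}"
  proof (intro set_eqI iffI)
    fix v assume "v \<in> \<sigma> ` ?B"
    then show "v \<in> {i..m}" using permutes_facts(2)[OF \<sigma>] by auto
  next
    fix v assume v: "v \<in> {i..m}"
    then have "v \<in> \<sigma> ` {1..m}" using i permutes_image[OF \<sigma>] by simp
    then show "v \<in> \<sigma> ` ?B" using v by auto
  qed
  moreover have "inj_on \<sigma> ?B" using permutes_inj[OF \<sigma>] by (rule inj_on_subset) simp
  ultimately show ?thesis by (metis card_image card_atLeastAtMost)
qed

lemma inv_num_append_last:
  assumes \<sigma>: "\<sigma> permutes {1..m}" and i: "1 \<le> i"
  shows "inv_num (Suc m) (append_last m i \<sigma>) = inv_num m \<sigma> + (Suc m - i)"
proof -
  let ?A = "{(a, b). 1 \<le> a \<and> a < b \<and> b \<le> m \<and> \<sigma> a > \<sigma> b}"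
  let ?B = "{a. 1 \<le> a \<and> a \<le> m \<and> i \<le> \<sigma> a}"
  have "finite ?A" by (rule finite_subset[of _ "{1..m} \<times> {1..m}"]) auto
  moreover have "finite ?B" by (rule finite_subset[of _ "{1..m}"]) auto
  moreover have "?A \<inter> (\<lambda>a. (a, Suc m)) ` ?B = {}" by auto
  ultimately have "card (?A \<union> (\<lambda>a. (a, Suc m)) ` ?B) = card ?A + card ?B"
    by (simp add: card_Un_disjoint card_image inj_on_def)
  then show ?thesis
    unfolding inv_num_def inversions_append_last card_values_at_least[OF \<sigma> i] .
qed

lemma maj_num_append_last:
  "maj_num (Suc m) (append_last m i \<sigma>) = maj_num m \<sigma> + (if i \<le> \<sigma> m then m else 0)"
proof -
  let ?A = "{k. 1 \<le> k \<and> k \<le> m - 1 \<and> \<sigma> k > \<sigma> (Suc k)}"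
  let ?B = "{k. k = m \<and> 1 \<le> m \<and> i \<le> \<sigma> m}"
  have "finite ?A" by (rule finite_subset[of _ "{1..m}"]) auto
  moreover have "?A \<inter> ?B = {}" by auto
  ultimately have "sum (\<lambda>k. k) (?A \<union> ?B) = sum (\<lambda>k. k) ?A + sum (\<lambda>k. k) ?B"
    by (intro sum.union_disjoint) auto
  moreover have "sum (\<lambda>k. k) ?B = (if i \<le> \<sigma> m then m else 0)"
    by (cases "m = 0") auto
  ultimately show ?thesis
    unfolding maj_num_def descents_append_last by simp
qed

lemma sum_over_last_value:
  assumes i: "1 \<le> i" "i \<le> Suc m"
  shows "(\<Sum>p\<in>{p. p permutes {1..Suc m} \<and> p (Suc m) = i}. f (inv_num (Suc m) p) (maj_num (Suc m) p))
    = (\<Sum>\<sigma>\<in>{\<sigma>. \<sigma> permutes {1..m}}.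
         f (inv_num m \<sigma> + (Suc m - i)) (maj_num m \<sigma> + (if i \<le> \<sigma> m then m else 0)))"
proof (rule sum.reindex_bij_witness[of _ "drop_last m i" "append_last m i", symmetric])
  fix \<sigma> assume "\<sigma> \<in> {\<sigma>. \<sigma> permutes {1..m}}"
  then have \<sigma>: "\<sigma> permutes {1..m}" by simp
  show "drop_last m i (append_last m i \<sigma>) = \<sigma>" using \<sigma> by (rule drop_last_append_last)
  show "append_last m i \<sigma> \<in> {p. p permutes {1..Suc m} \<and> p (Suc m) = i}"
    using append_last_permutes[OF \<sigma> i] by (simp add: append_last_simps)
  show "f (inv_num (Suc m) (append_last m i \<sigma>)) (maj_num (Suc m) (append_last m i \<sigma>)) =
      f (inv_num m \<sigma> + (Suc m - i)) (maj_num m \<sigma> + (if i \<le> \<sigma> m then m else 0))"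
    by (simp add: inv_num_append_last[OF \<sigma> i(1)] maj_num_append_last)
next
  fix p assume "p \<in> {p. p permutes {1..Suc m} \<and> p (Suc m) = i}"
  then have p: "p permutes {1..Suc m}" "p (Suc m) = i" by auto
  show "append_last m i (drop_last m i p) = p" using p by (rule append_last_drop_last)
  show "drop_last m i p \<in> {\<sigma>. \<sigma> permutes {1..m}}" using drop_last_permutes[OF p] by simp
qed

definition moment :: "nat \<Rightarrow> nat \<Rightarrow> nat \<Rightarrow> rat" where
  "moment r s n =
     (\<Sum>p\<in>{p. p permutes {1..n}}. of_nat (inv_num n p) ^ r * of_nat (maj_num n p) ^ s)"

definition last_moment :: "nat \<Rightarrow> nat \<Rightarrow> nat \<Rightarrow> nat \<Rightarrow> rat" where
  "last_moment r s n i =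
     (\<Sum>p\<in>{p. p permutes {1..n} \<and> p n = i}. of_nat (inv_num n p) ^ r * of_nat (maj_num n p) ^ s)"

definition tail_moment :: "nat \<Rightarrow> nat \<Rightarrow> nat \<Rightarrow> nat \<Rightarrow> rat" where
  "tail_moment r s n i =
     (\<Sum>p\<in>{p. p permutes {1..n} \<and> i \<le> p n}. of_nat (inv_num n p) ^ r * of_nat (maj_num n p) ^ s)"

lemma sum_permutations_by_last_value:
  fixes h :: "(nat \<Rightarrow> nat) \<Rightarrow> rat"
  assumes "1 \<le> n" "A \<subseteq> {1..n}"
  shows "(\<Sum>p\<in>{p. p permutes {1..n} \<and> p n \<in> A}. h p)
           = (\<Sum>j\<in>A. \<Sum>p\<in>{p. p permutes {1..n} \<and> p n = j}. h p)"
proof -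
  have "finite {p. p permutes {1..n} \<and> p n \<in> A}"
    by (rule finite_subset[OF _ finite_permutations[of "{1..n}"]]) auto
  moreover have "finite A" using assms(2) finite_subset by blast
  ultimately have "(\<Sum>p\<in>{p. p permutes {1..n} \<and> p n \<in> A}. h p) =
      (\<Sum>j\<in>A. \<Sum>p\<in>{q \<in> {p. p permutes {1..n} \<and> p n \<in> A}. q n = j}. h p)"
    by (rule sum.group[symmetric]) blast
  also have "\<dots> = (\<Sum>j\<in>A. \<Sum>p\<in>{p. p permutes {1..n} \<and> p n = j}. h p)"
    by (intro sum.cong refl arg_cong[where f = "sum h"]) blast
  finally show ?thesis .
qed

lemma moment_eq_sum_last_moment:
  assumes "1 \<le> n"
  shows "moment r s n = (\<Sum>i\<in>{1..n}. last_moment r s n i)"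
proof -
  have "{p. p permutes {1..n} \<and> p n \<in> {1..n}} = {p. p permutes {1..n}}"
    using assms permutes_in_image by fastforce
  then show ?thesis
    using sum_permutations_by_last_value[OF assms order_refl]
    unfolding moment_def last_moment_def by simp
qed

lemma tail_moment_eq_sum_last_moment:
  assumes "1 \<le> n" "1 \<le> i"
  shows "tail_moment r s n i = (\<Sum>j\<in>{i..n}. last_moment r s n j)"
proof -
  have "{p. p permutes {1..n} \<and> p n \<in> {i..n}} = {p. p permutes {1..n} \<and> i \<le> p n}"
    using assms permutes_in_image by fastforce
  moreover have "{i..n} \<subseteq> {1..n}" using assms(2) by auto
  ultimately show ?thesis
    using sum_permutations_by_last_value[OF assms(1), of "{i..n}"]
    unfolding tail_moment_def last_moment_def by simp
qed

lemma binomial_expansion_with_indicator: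
  fixes X Y c M :: "'a :: comm_semiring_1"
  shows "(X + c) ^ r * (Y + (if P then M else 0)) ^ s =
    (\<Sum>a\<le>r. of_nat (r choose a) * c ^ (r - a) *
       (X ^ a * Y ^ s + (if P then \<Sum>b<s. of_nat (s choose b) * M ^ (s - b) * (X ^ a * Y ^ b) else 0)))"
proof -
  have "(Y + (if P then M else 0)) ^ s =
      Y ^ s + (if P then \<Sum>b<s. of_nat (s choose b) * Y ^ b * M ^ (s - b) else 0)"
    using binomial_ring[of Y M s] by (simp add: lessThan_Suc_atMost[symmetric] add.commute)
  then show ?thesis
    unfolding binomial_ring[of X c r] sum_distrib_right
    by (intro sum.cong refl) (simp add: sum_distrib_left algebra_simps)
qed

lemma last_moment_recurrence:
  assumes i: "1 \<le> i" "i \<le> Suc m"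
  shows "last_moment r s (Suc m) i =
    (\<Sum>a\<le>r. of_nat (r choose a) * of_nat (Suc m - i) ^ (r - a) *
       (moment a s m + (\<Sum>b<s. of_nat (s choose b) * of_nat m ^ (s - b) * tail_moment a b m i)))"
proof -
  let ?S = "{\<sigma>. \<sigma> permutes {1..m}}"
  let ?c = "of_nat (Suc m - i) :: rat"
  let ?X = "\<lambda>\<sigma>. of_nat (inv_num m \<sigma>) :: rat" and ?Y = "\<lambda>\<sigma>. of_nat (maj_num m \<sigma>) :: rat"
  let ?T = "\<lambda>a \<sigma>. \<Sum>b<s. of_nat (s choose b) * of_nat m ^ (s - b) * (?X \<sigma> ^ a * ?Y \<sigma> ^ b)"
  have "finite ?S" by (rule finite_permutations) simp
  have "last_moment r s (Suc m) i = (\<Sum>\<sigma>\<in>?S. (?X \<sigma> + ?c) ^ r *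
       (?Y \<sigma> + (if i \<le> \<sigma> m then of_nat m else 0)) ^ s)"
    unfolding last_moment_def sum_over_last_value[OF i, where f = "\<lambda>u v. of_nat u ^ r * of_nat v ^ s"]
    by (intro sum.cong refl) simp
  also have "\<dots> = (\<Sum>\<sigma>\<in>?S. \<Sum>a\<le>r. of_nat (r choose a) * ?c ^ (r - a) *
       (?X \<sigma> ^ a * ?Y \<sigma> ^ s + (if i \<le> \<sigma> m then ?T a \<sigma> else 0)))"
    by (simp only: binomial_expansion_with_indicator)
  also have "\<dots> = (\<Sum>a\<le>r. of_nat (r choose a) * ?c ^ (r - a) *
       ((\<Sum>\<sigma>\<in>?S. ?X \<sigma> ^ a * ?Y \<sigma> ^ s) + (\<Sum>\<sigma>\<in>?S. if i \<le> \<sigma> m then ?T a \<sigma> else 0)))"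
    by (subst sum.swap) (simp only: sum_distrib_left[symmetric] sum.distrib)
  also have "\<dots> = (\<Sum>a\<le>r. of_nat (r choose a) * ?c ^ (r - a) *
       (moment a s m + (\<Sum>b<s. of_nat (s choose b) * of_nat m ^ (s - b) * tail_moment a b m i)))"
  proof (intro sum.cong refl arg_cong2[where f = "(*)"] arg_cong2[where f = "(+)"])
    fix a
    show "(\<Sum>\<sigma>\<in>?S. ?X \<sigma> ^ a * ?Y \<sigma> ^ s) = moment a s m"
      unfolding moment_def ..
    have "(\<Sum>\<sigma>\<in>?S. if i \<le> \<sigma> m then ?T a \<sigma> else 0) = (\<Sum>\<sigma>\<in>{\<sigma> \<in> ?S. i \<le> \<sigma> m}. ?T a \<sigma>)"
      using \<open>finite ?S\<close> by (rule sum.inter_filter[symmetric])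
    also have "\<dots> = (\<Sum>b<s. of_nat (s choose b) * of_nat m ^ (s - b) * tail_moment a b m i)"
      unfolding tail_moment_def by (subst sum.swap) (simp add: sum_distrib_left)
    finally show "(\<Sum>\<sigma>\<in>?S. if i \<le> \<sigma> m then ?T a \<sigma> else 0) =
        (\<Sum>b<s. of_nat (s choose b) * of_nat m ^ (s - b) * tail_moment a b m i)" .
  qed
  finally show ?thesis .
qed

lemma normalized_last_moment_recurrence:
  assumes i: "1 \<le> i" "i \<le> Suc m"
  shows "last_moment r s (Suc m) i / fact m =
    (\<Sum>a\<le>r. of_nat (r choose a) * (of_nat m + 1 - of_nat i) ^ (r - a) *
       (moment a s m / fact m +
         (\<Sum>b<s. of_nat (s choose b) * (of_nat m ^ (s - b) * tail_moment a b m i / fact m))))"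
proof -
  have "of_nat (Suc m - i) = (of_nat m + 1 - of_nat i :: rat)" using i by (simp add: of_nat_diff)
  then show ?thesis
    unfolding last_moment_recurrence[OF i] sum_divide_distrib
    by (intro sum.cong refl)
       (simp only: sum_divide_distrib[symmetric] add_divide_distrib[symmetric] times_divide_eq_right mult.assoc)
qed

definition moment_poly :: "nat \<Rightarrow> nat \<Rightarrow> bool" where
  "moment_poly r s \<longleftrightarrow> (\<exists>H. bipoly H \<and> (\<forall>n. moment r s n / fact n = H (of_nat n) 0))"

definition last_moment_poly :: "nat \<Rightarrow> nat \<Rightarrow> bool" where
  "last_moment_poly r s \<longleftrightarrow> (\<exists>Q. bipoly Q \<and>
     (\<forall>n i. 1 \<le> i \<longrightarrow> i \<le> n \<longrightarrow> last_moment r s n i / fact (n - 1) = Q (of_nat n) (of_nat i)))"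

lemma tail_moment_eq_partial_sums:
  assumes Q: "\<And>n i. 1 \<le> i \<Longrightarrow> i \<le> n \<Longrightarrow> last_moment a b n i / fact (n - 1) = Q (of_nat n) (of_nat i)"
    and A: "\<And>x k. A x (of_nat k) = (\<Sum>j<k. Q x (of_nat j))"
    and m: "1 \<le> m" and i: "1 \<le> i" "i \<le> Suc m"
  shows "tail_moment a b m i = fact (m - 1) * (A (of_nat m) (of_nat m + 1) - A (of_nat m) (of_nat i))"
proof -
  have split: "{..<Suc m} = {..<i} \<union> {i..m}" using i(2) by auto
  have "(\<Sum>j<Suc m. Q (of_nat m) (of_nat j)) =
      (\<Sum>j<i. Q (of_nat m) (of_nat j)) + (\<Sum>j\<in>{i..m}. Q (of_nat m) (of_nat j))"
    unfolding split by (rule sum.union_disjoint) auto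
  then have sum_Q: "(\<Sum>j\<in>{i..m}. Q (of_nat m) (of_nat j)) =
      A (of_nat m) (of_nat m + 1) - A (of_nat m) (of_nat i)"
    using A[of "of_nat m" "Suc m"] A[of "of_nat m" i] by (simp add: add.commute)
  have "tail_moment a b m i = (\<Sum>j\<in>{i..m}. fact (m - 1) * Q (of_nat m) (of_nat j))"
    unfolding tail_moment_eq_sum_last_moment[OF m i(1)]
    using i(1) by (intro sum.cong refl) (simp add: Q[symmetric])
  also have "\<dots> = fact (m - 1) * (A (of_nat m) (of_nat m + 1) - A (of_nat m) (of_nat i))"
    by (simp add: sum_distrib_left[symmetric] sum_Q)
  finally show ?thesis .
qed

(* For b < s, m^(s-b) times a tail moment divided by m! is polynomial: by the previous
   lemma the tail moment is (m-1)! times a polynomial, and one factor m cancels m!. *)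
lemma scaled_tail_moment_poly:
  assumes "b < s" and "last_moment_poly a b"
  shows "\<exists>W. bipoly W \<and> (\<forall>m i. 1 \<le> i \<longrightarrow> i \<le> Suc m \<longrightarrow>
     of_nat m ^ (s - b) * tail_moment a b m i / fact m = W (of_nat m) (of_nat i))"
proof -
  obtain Q where "bipoly Q" and Q:
    "\<And>n i. 1 \<le> i \<Longrightarrow> i \<le> n \<Longrightarrow> last_moment a b n i / fact (n - 1) = Q (of_nat n) (of_nat i)"
    using assms(2) unfolding last_moment_poly_def by blast
  obtain A where "bipoly A" and A: "\<And>x k. A x (of_nat k) = (\<Sum>j<k. Q x (of_nat j))"
    using bipoly_partial_sum[OF \<open>bipoly Q\<close>] by blast
  define W where "W x y = x ^ (s - b - 1) * (A x (x + 1) - A x y)" for x y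
  have "bipoly W"
    unfolding W_def by (intro bipoly_mult bipoly_power bipoly_x bipoly_diff \<open>bipoly A\<close>
        bipoly_compose[OF \<open>bipoly A\<close>] bipoly.add bipoly.const bipoly_y)
  moreover have "of_nat m ^ (s - b) * tail_moment a b m i / fact m = W (of_nat m) (of_nat i)"
    if i: "1 \<le> i" "i \<le> Suc m" for m i
  proof (cases "m = 0")
    case True
    then show ?thesis using i \<open>b < s\<close> by (simp add: W_def)
  next
    case False
    then have m: "1 \<le> m" by simp
    have "(fact m :: rat) = of_nat m * fact (m - 1)" using m by (simp add: fact_reduce)
    moreover have "(of_nat m :: rat) ^ (s - b) = of_nat m * of_nat m ^ (s - b - 1)"
      using \<open>b < s\<close> by (simp add: power_eq_if)
    ultimately have "of_nat m ^ (s - b) * tail_moment a b m i / fact m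
        = of_nat m ^ (s - b - 1) * (tail_moment a b m i / fact (m - 1))"
      using m by simp
    then show ?thesis
      by (simp add: tail_moment_eq_partial_sums[OF Q A m i] W_def)
  qed
  ultimately show ?thesis by blast
qed

lemma last_moment_step:
  assumes tail: "\<And>a b. b < s \<Longrightarrow> last_moment_poly a b"
    and lower: "\<And>a. a < r \<Longrightarrow> moment_poly a s"
  shows "\<exists>L. bipoly L \<and> (\<forall>m i. 1 \<le> i \<longrightarrow> i \<le> Suc m \<longrightarrow>
     last_moment r s (Suc m) i / fact m = moment r s m / fact m + L (of_nat m) (of_nat i))"
proof -
  have "\<forall>a b. \<exists>W. b < s \<longrightarrow> bipoly W \<and> (\<forall>m i. 1 \<le> i \<longrightarrow> i \<le> Suc m \<longrightarrow>
      of_nat m ^ (s - b) * tail_moment a b m i / fact m = W (of_nat m) (of_nat i))"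
    using scaled_tail_moment_poly tail by blast
  then obtain W where W: "\<And>a b. b < s \<Longrightarrow> bipoly (W a b) \<and> (\<forall>m i. 1 \<le> i \<longrightarrow> i \<le> Suc m \<longrightarrow>
      of_nat m ^ (s - b) * tail_moment a b m i / fact m = W a b (of_nat m) (of_nat i))"
    by metis
  obtain H where H: "\<And>a. a < r \<Longrightarrow> bipoly (H a) \<and> (\<forall>n. moment a s n / fact n = H a (of_nat n) 0)"
    using lower unfolding moment_poly_def by metis
  then have H_eq: "\<And>a n. a < r \<Longrightarrow> H a (of_nat n) 0 = moment a s n / fact n"
    by simp
  from W have W_eq: "\<And>a b m i. b < s \<Longrightarrow> 1 \<le> i \<Longrightarrow> i \<le> Suc m \<Longrightarrow>
      W a b (of_nat m) (of_nat i) = of_nat m ^ (s - b) * tail_moment a b m i / fact m"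
    by simp
  define L where "L x y =
      (\<Sum>a<r. of_nat (r choose a) * (x + 1 - y) ^ (r - a) * H a x 0)
    + (\<Sum>a\<le>r. of_nat (r choose a) * (x + 1 - y) ^ (r - a) * (\<Sum>b<s. of_nat (s choose b) * W a b x y))"
    for x y :: rat
  have "bipoly (\<lambda>x y. x + 1 - y)"
    by (intro bipoly_diff bipoly.add bipoly_x bipoly_y bipoly.const)
  then have "bipoly L"
    unfolding L_def using H W
    by (intro bipoly.add bipoly_sum bipoly_mult bipoly_power bipoly.const
        bipoly_compose[OF _ bipoly_x bipoly.const] finite_lessThan finite_atMost) auto
  moreover have "last_moment r s (Suc m) i / fact m = moment r s m / fact m + L (of_nat m) (of_nat i)"
    if i: "1 \<le> i" "i \<le> Suc m" for m i
  proof -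
    let ?c = "of_nat m + 1 - of_nat i :: rat"
    have "last_moment r s (Suc m) i / fact m =
        (\<Sum>a\<le>r. of_nat (r choose a) * ?c ^ (r - a) * (moment a s m / fact m))
      + (\<Sum>a\<le>r. of_nat (r choose a) * ?c ^ (r - a) *
            (\<Sum>b<s. of_nat (s choose b) * W a b (of_nat m) (of_nat i)))"
      unfolding normalized_last_moment_recurrence[OF i] using i
      by (simp add: W_eq distrib_left sum.distrib)
    also have "(\<Sum>a\<le>r. of_nat (r choose a) * ?c ^ (r - a) * (moment a s m / fact m))
       = (\<Sum>a<r. of_nat (r choose a) * ?c ^ (r - a) * H a (of_nat m) 0) + moment r s m / fact m"
      by (simp add: lessThan_Suc_atMost[symmetric] H_eq)
    finally show ?thesis unfolding L_def by simp
  qed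
  ultimately show ?thesis by blast
qed

(* If h(m+1) = h(m) + (1/(m+1)) sum_{i=1}^{m+1} L(m,i) with L polynomial, then h is
   polynomial: the sum is a polynomial in m+1 vanishing at 0, hence divisible by m+1. *)
lemma averaging_recurrence_poly:
  fixes h :: "nat \<Rightarrow> rat"
  assumes "bipoly L"
    and rec: "\<And>m. h (Suc m) = h m + (\<Sum>i\<in>{1..Suc m}. L (of_nat m) (of_nat i)) / of_nat (Suc m)"
  shows "\<exists>H. bipoly H \<and> (\<forall>n. h n = H (of_nat n) 0)"
proof -
  have "bipoly (\<lambda>x y. L (x - 1) (y + 1))"
    by (intro bipoly_compose[OF \<open>bipoly L\<close>] bipoly_diff bipoly.add bipoly_x bipoly_y bipoly.const)
  then obtain F where "bipoly F"
    and F: "\<And>x k. F x (of_nat k) = (\<Sum>j<k. L (x - 1) (of_nat j + 1))"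
    using bipoly_partial_sum by blast
  have "bipoly (\<lambda>x y. F x x)" by (rule bipoly_compose[OF \<open>bipoly F\<close> bipoly_x bipoly_x])
  then obtain g where "bipoly g" and g: "\<forall>x y. F x x = F 0 0 + x * g x y"
    using bipoly_split_x by blast
  have "F 0 0 = 0" using F[of 0 0] by simp
  with g have Fxx: "F x x = x * g x x" for x by (metis add_0)
  have numerator: "(\<Sum>i\<in>{1..Suc m}. L (of_nat m) (of_nat i)) =
      of_nat (Suc m) * g (of_nat (Suc m)) (of_nat (Suc m))" for m
  proof -
    have "(\<Sum>i\<in>{1..Suc m}. L (of_nat m) (of_nat i)) = (\<Sum>k<Suc m. L (of_nat m) (of_nat (Suc k)))"
      unfolding One_nat_def by (rule sum.atLeast1_atMost_eq)
    also have "\<dots> = F (of_nat (Suc m)) (of_nat (Suc m))"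
      unfolding F by (simp add: add.commute)
    finally show ?thesis by (simp only: Fxx)
  qed
  have step: "h (Suc m) = h m + g (of_nat (Suc m)) (of_nat (Suc m))" for m
    using rec[of m] unfolding numerator by (simp del: of_nat_Suc)
  have "bipoly (\<lambda>x y. g (y + 1) (y + 1))"
    by (intro bipoly_compose[OF \<open>bipoly g\<close>] bipoly.add bipoly_y bipoly.const)
  then obtain G where "bipoly G"
    and G: "\<And>x k. G x (of_nat k) = (\<Sum>j<k. g (of_nat j + 1) (of_nat j + 1))"
    using bipoly_partial_sum by blast
  have "\<forall>n. h n = h 0 + G 0 (of_nat n)"
  proof
    fix n
    show "h n = h 0 + G 0 (of_nat n)"
      unfolding G by (induction n) (simp_all add: step add_ac)
  qed
  moreover have "bipoly (\<lambda>x y. h 0 + G y x)"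
    by (intro bipoly.add bipoly.const bipoly_compose[OF \<open>bipoly G\<close> bipoly_y bipoly_x])
  ultimately show ?thesis by (intro exI[of _ "\<lambda>x y. h 0 + G y x"] conjI)
qed

lemma moment_poly_from_last_moment:
  assumes "bipoly L"
    and L: "\<And>m i. 1 \<le> i \<Longrightarrow> i \<le> Suc m \<Longrightarrow>
      last_moment r s (Suc m) i / fact m = moment r s m / fact m + L (of_nat m) (of_nat i)"
  shows "moment_poly r s"
proof -
  have "moment r s (Suc m) / fact (Suc m) =
      moment r s m / fact m + (\<Sum>i\<in>{1..Suc m}. L (of_nat m) (of_nat i)) / of_nat (Suc m)" for m
  proof -
    have "moment r s (Suc m) / fact (Suc m) = (\<Sum>i\<in>{1..Suc m}. last_moment r s (Suc m) i / fact m) / of_nat (Suc m)"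
      by (simp add: moment_eq_sum_last_moment sum_divide_distrib[symmetric] divide_divide_eq_left mult.commute)
    also have "\<dots> = (\<Sum>i\<in>{1..Suc m}. moment r s m / fact m + L (of_nat m) (of_nat i)) / of_nat (Suc m)"
      using L by (intro arg_cong2[where f = "(/)"] sum.cong refl) auto
    also have "\<dots> = moment r s m / fact m + (\<Sum>i\<in>{1..Suc m}. L (of_nat m) (of_nat i)) / of_nat (Suc m)"
      by (simp add: sum.distrib add_divide_distrib del: of_nat_Suc)
    finally show ?thesis .
  qed
  then show ?thesis
    unfolding moment_poly_def by (rule averaging_recurrence_poly[OF \<open>bipoly L\<close>])
qed

lemma last_moment_poly_from_moment:
  assumes "bipoly L"
    and L: "\<And>m i. 1 \<le> i \<Longrightarrow> i \<le> Suc m \<Longrightarrow>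
      last_moment r s (Suc m) i / fact m = moment r s m / fact m + L (of_nat m) (of_nat i)"
    and "moment_poly r s"
  shows "last_moment_poly r s"
proof -
  obtain H where "bipoly H" and H: "\<And>n. moment r s n / fact n = H (of_nat n) 0"
    using \<open>moment_poly r s\<close> unfolding moment_poly_def by blast
  define Q where "Q x y = H (x - 1) 0 + L (x - 1) y" for x y
  have "bipoly Q"
    unfolding Q_def by (intro bipoly.add bipoly_compose[OF \<open>bipoly H\<close>]
        bipoly_compose[OF \<open>bipoly L\<close>] bipoly_diff bipoly_x bipoly_y bipoly.const)
  moreover have "last_moment r s n i / fact (n - 1) = Q (of_nat n) (of_nat i)"
    if "1 \<le> i" "i \<le> n" for n i
  proof -
    obtain m where n: "n = Suc m" using \<open>1 \<le> i\<close> \<open>i \<le> n\<close> by (cases n) auto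
    show ?thesis unfolding n Q_def using L[of i m] H[of m] that n by simp
  qed
  ultimately show ?thesis unfolding last_moment_poly_def by blast
qed

lemma moments_poly: "moment_poly r s \<and> last_moment_poly r s"
proof (induction s arbitrary: r rule: less_induct)
  case (less s)
  note lower_s = less.IH
  show ?case
  proof (induction r rule: less_induct)
    case (less r)
    obtain L where "bipoly L" and L: "\<forall>m i. 1 \<le> i \<longrightarrow> i \<le> Suc m \<longrightarrow>
        last_moment r s (Suc m) i / fact m = moment r s m / fact m + L (of_nat m) (of_nat i)"
      using last_moment_step[of s r] lower_s less.IH by blast
    then have "moment_poly r s" by (intro moment_poly_from_last_moment) auto
    moreover from \<open>bipoly L\<close> L this have "last_moment_poly r s"
      by (intro last_moment_poly_from_moment) auto
    ultimately show ?case ..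
  qed
qed

lemma falling_eq_poly: "falling z k = poly (\<Prod>j<k. [:- of_nat j, 1:]) z"
  unfolding falling_def poly_prod by simp

lemma poly_shift_expansion:
  fixes P :: "rat poly"
  assumes "bipoly \<mu>"
  shows "\<exists>\<alpha>. (\<forall>a. bipoly (\<alpha> a)) \<and>
           (\<forall>z x y. poly P (z - \<mu> x y) = (\<Sum>a\<le>degree P. \<alpha> a x y * z ^ a))"
proof -
  let ?d = "degree P"
  define \<alpha> where "\<alpha> a x y = (\<Sum>t\<le>?d. coeff P t * of_nat (t choose a) * (- \<mu> x y) ^ (t - a))" for a x y
  have "bipoly (\<lambda>x y. - \<mu> x y)" using bipoly_scale[OF assms, of "-1"] by simp
  then have "bipoly (\<alpha> a)" for a
    unfolding \<alpha>_def by (intro bipoly_sum bipoly_scale bipoly_power) auto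
  moreover have "poly P (z - \<mu> x y) = (\<Sum>a\<le>?d. \<alpha> a x y * z ^ a)" for z x y
  proof -
    have binomial: "(z - \<mu> x y) ^ t = (\<Sum>a\<le>?d. of_nat (t choose a) * z ^ a * (- \<mu> x y) ^ (t - a))"
      if "t \<le> ?d" for t
      using binomial_ring[of z "- \<mu> x y" t] that by (simp add: sum.mono_neutral_left)
    have "poly P (z - \<mu> x y) = (\<Sum>t\<le>?d. coeff P t * (z - \<mu> x y) ^ t)"
      by (simp add: poly_altdef)
    also have "\<dots> = (\<Sum>t\<le>?d. \<Sum>a\<le>?d. coeff P t * of_nat (t choose a) * (- \<mu> x y) ^ (t - a) * z ^ a)"
      by (intro sum.cong refl) (simp add: binomial sum_distrib_left mult_ac)
    also have "\<dots> = (\<Sum>a\<le>?d. \<alpha> a x y * z ^ a)"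
      unfolding \<alpha>_def sum_distrib_right by (rule sum.swap)
    finally show ?thesis .
  qed
  ultimately show ?thesis by blast
qed

(* The factorial moments are polynomial in (n,i): expand both falling factorials in
   powers of inv and maj, which turns FM into a combination of the G_{a,b}(n,i)/(n-1)!. *)
lemma FM_bipoly:
  "\<exists>\<Phi>. bipoly \<Phi> \<and> (\<forall>n i. 1 \<le> i \<and> i \<le> n \<longrightarrow> FM r s n i = \<Phi> (of_nat n) (of_nat i))"
proof -
  define \<mu>' where "\<mu>' x y = x - y + (x - 1) * (x - 2) / 4" for x y :: rat
  have "bipoly \<mu>'"
    unfolding \<mu>'_def by (intro bipoly.add bipoly_diff bipoly_divide bipoly_mult bipoly_x bipoly_y bipoly.const)
  have mu: "mu n i = \<mu>' (of_nat n) (of_nat i)" for n i unfolding mu_def \<mu>'_def by simp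
  define P where "P k = (\<Prod>j<k. [:- of_nat j, 1:] :: rat poly)" for k
  obtain \<alpha> where "\<And>a. bipoly (\<alpha> a)"
    and \<alpha>: "\<And>z x y. poly (P r) (z - \<mu>' x y) = (\<Sum>a\<le>degree (P r). \<alpha> a x y * z ^ a)"
    using poly_shift_expansion[OF \<open>bipoly \<mu>'\<close>] by blast
  obtain \<beta> where "\<And>b. bipoly (\<beta> b)"
    and \<beta>: "\<And>z x y. poly (P s) (z - \<mu>' x y) = (\<Sum>b\<le>degree (P s). \<beta> b x y * z ^ b)"
    using poly_shift_expansion[OF \<open>bipoly \<mu>'\<close>] by blast
  have "\<forall>a b. \<exists>Q. bipoly Q \<and> (\<forall>n i. 1 \<le> i \<longrightarrow> i \<le> n \<longrightarrow>
      last_moment a b n i / fact (n - 1) = Q (of_nat n) (of_nat i))"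
    using moments_poly unfolding last_moment_poly_def by blast
  then obtain Q where "\<And>a b. bipoly (Q a b)" and Q: "\<And>a b n i. 1 \<le> i \<Longrightarrow> i \<le> n \<Longrightarrow>
      last_moment a b n i / fact (n - 1) = Q a b (of_nat n) (of_nat i)"
    by metis
  define \<Phi> where "\<Phi> x y = (\<Sum>a\<le>degree (P r). \<Sum>b\<le>degree (P s). \<alpha> a x y * \<beta> b x y * Q a b x y)" for x y
  have "bipoly \<Phi>"
    unfolding \<Phi>_def
    by (intro bipoly_sum bipoly_mult \<open>\<And>a. bipoly (\<alpha> a)\<close> \<open>\<And>b. bipoly (\<beta> b)\<close> \<open>\<And>a b. bipoly (Q a b)\<close> finite_atMost)
  moreover have "FM r s n i = \<Phi> (of_nat n) (of_nat i)" if "1 \<le> i" "i \<le> n" for n i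
  proof -
    let ?x = "of_nat n :: rat" and ?y = "of_nat i :: rat"
    let ?T = "{p. p permutes {1..n} \<and> p n = i}"
    let ?c = "\<lambda>a b. \<alpha> a ?x ?y * \<beta> b ?x ?y"
    have "FM r s n i = (\<Sum>p\<in>?T. \<Sum>a\<le>degree (P r). \<Sum>b\<le>degree (P s).
        ?c a b * (of_nat (inv_num n p) ^ a * of_nat (maj_num n p) ^ b)) / fact (n - 1)"
      unfolding FM_def falling_eq_poly P_def[symmetric] mu \<alpha> \<beta> sum_product
      by (simp add: mult_ac)
    also have "\<dots> = (\<Sum>a\<le>degree (P r). \<Sum>b\<le>degree (P s). ?c a b * (last_moment a b n i / fact (n - 1)))"
      unfolding last_moment_def sum_divide_distrib
      by (subst sum.swap, intro sum.cong refl, subst sum.swap) (simp add: sum_distrib_left)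
    also have "\<dots> = \<Phi> ?x ?y"
      unfolding \<Phi>_def using Q that by simp
    finally show ?thesis .
  qed
  ultimately show ?thesis by blast
qed

theorem mainTheorem6:
  fixes r s :: nat
  shows "(\<exists> P :: rat poly. \<forall> n \<ge> 1.
            (1 / of_nat (fact n)) * (\<Sum> p \<in> {p. p permutes {1..n}}.
               of_nat (inv_num n p) ^ r * of_nat (maj_num n p) ^ s) = poly P (of_nat n))
       \<and> (\<exists> (d :: nat) (c :: nat \<Rightarrow> nat \<Rightarrow> rat). \<forall> n i. 1 \<le> i \<and> i \<le> n \<longrightarrow>
            FM r s n i = (\<Sum> a \<le> d. \<Sum> b \<le> d. c a b * of_nat n ^ a * of_nat i ^ b))"
proof
  obtain H where "bipoly H" and H: "\<And>n. moment r s n / fact n = H (of_nat n) 0"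
    using moments_poly unfolding moment_poly_def by blast
  obtain P where P: "\<And>x. H x 0 = poly P x"
    using bipoly_univariate[OF \<open>bipoly H\<close>] by blast
  show "\<exists> P :: rat poly. \<forall> n \<ge> 1.
            (1 / of_nat (fact n)) * (\<Sum> p \<in> {p. p permutes {1..n}}.
               of_nat (inv_num n p) ^ r * of_nat (maj_num n p) ^ s) = poly P (of_nat n)"
    using H P unfolding moment_def by (intro exI[of _ P]) simp
next
  obtain \<Phi> where "bipoly \<Phi>" and \<Phi>: "\<forall>n i. 1 \<le> i \<and> i \<le> n \<longrightarrow> FM r s n i = \<Phi> (of_nat n) (of_nat i)"
    using FM_bipoly by blast
  obtain d c where "\<forall>x y. \<Phi> x y = (\<Sum>a\<le>d. \<Sum>b\<le>d. c a b * x ^ a * y ^ b)"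
    using bipoly_coeff_form[OF \<open>bipoly \<Phi>\<close>] by blast
  with \<Phi> show "\<exists> (d :: nat) (c :: nat \<Rightarrow> nat \<Rightarrow> rat). \<forall> n i. 1 \<le> i \<and> i \<le> n \<longrightarrow>
      FM r s n i = (\<Sum> a \<le> d. \<Sum> b \<le> d. c a b * of_nat n ^ a * of_nat i ^ b)"
    by auto
qed

end
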